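(* Let $(H;\langle\cdot,\cdot\rangle)$ be an inner product space over $\mathbb{K}\in\{\mathbb{R},\mathbb{C}\}$, and let $\{e_i\}_{i\in I}$ and $\{f_j\}_{j\in J}$ be two finite orthonormal families of vectors in $H$. Then for any $x,y\in H\setminus\{0\}$, $$\left|\sum_{i\in I}\langle x,e_i\rangle\langle e_i,y\rangle+\sum_{j\in J}\langle x,f_j\rangle\langle f_j,y\rangle-2\sum_{i\in I,\,j\in J}\langle x,e_i\rangle\langle f_j,y\rangle\langle e_i,f_j\rangle-\frac12\langle x,y\rangle\right|\le\frac12\|x\|\,\|y\|.$$ Equality holds if and only if there exists $\lambda\in\mathbb{K}$ such that $$x-\lambda y=2\left(\sum_{i\in I}\langle x,e_i\rangle e_i-\lambda\sum_{j\in J}\langle y,f_j\rangle f_j\right).$$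
   Context: The inner product is linear in the first argument and conjugate-linear in the second; $\|x\|=\langle x,x\rangle^{1/2}$. A family $\{e_i\}_{i\in I}$ is orthonormal if $\langle e_i,e_j\rangle=1$ for $i=j$ and $0$ for $i\neq j$. *)

theory Defs
  imports "HOL-Analysis.Analysis"
begin

class complex_inner = ab_group_add +
  fixes scaleC :: "complex \<Rightarrow> 'a \<Rightarrow> 'a" (infixr "*\<^sub>C" 75)
    and cinner :: "'a \<Rightarrow> 'a \<Rightarrow> complex"
  assumes scaleC_add_right: "a *\<^sub>C (x + y) = a *\<^sub>C x + a *\<^sub>C y"
    and scaleC_add_left: "(a + b) *\<^sub>C x = a *\<^sub>C x + b *\<^sub>C x"
    and scaleC_scaleC: "a *\<^sub>C (b *\<^sub>C x) = (a * b) *\<^sub>C x"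
    and scaleC_one: "1 *\<^sub>C x = x"
    and cinner_add_left: "cinner (x + y) z = cinner x z + cinner y z"
    and cinner_scaleC_left: "cinner (a *\<^sub>C x) y = a * cinner x y"
    and cinner_commute: "cinner x y = cnj (cinner y x)"
    and cinner_nonneg: "0 \<le> Re (cinner x x)"
    and cinner_eq_zero_iff: "cinner x x = 0 \<longleftrightarrow> x = 0"

definition cnorm :: "'a::complex_inner \<Rightarrow> real" where
  "cnorm x = sqrt (Re (cinner x x))"

definition orthonormal_family :: "'i set \<Rightarrow> ('i \<Rightarrow> 'a::real_inner) \<Rightarrow> bool" where
  "orthonormal_family I e \<longleftrightarrow>
     (\<forall>i\<in>I. \<forall>j\<in>I. e i \<bullet> e j = (if i = j then 1 else 0))"

definition corthonormal_family :: "'i set \<Rightarrow> ('i \<Rightarrow> 'a::complex_inner) \<Rightarrow> bool" where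
  "corthonormal_family I e \<longleftrightarrow>
     (\<forall>i\<in>I. \<forall>j\<in>I. cinner (e i) (e j) = (if i = j then 1 else 0))"

end

theory Submission
  imports Defs
begin

text \<open>Let \<open>p\<close> and \<open>q\<close> be the orthogonal projections of \<open>x\<close> and \<open>y\<close> onto the spans of the
  two families. Then \<open>u = 2p - x\<close> and \<open>v = 2q - y\<close> are the reflections of \<open>x\<close> and \<open>y\<close> in these
  spans, so \<open>\<parallel>u\<parallel> = \<parallel>x\<parallel>\<close> and \<open>\<parallel>v\<parallel> = \<parallel>y\<parallel>\<close>, and expanding \<open>\<langle>u, v\<rangle>\<close> shows that the expression
  in the theorem is \<open>-\<langle>u, v\<rangle>/2\<close>. The bound is therefore the Cauchy-Schwarz inequality for \<open>u\<close>
  and \<open>v\<close>, and equality holds iff \<open>u = \<lambda>v\<close>, which is the stated condition.\<close>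

lemma cinner_add_right: "cinner x (y + z) = cinner x y + cinner x z"
  for x :: "'a::complex_inner"
  by (metis cinner_commute cinner_add_left complex_cnj_add)

lemma cinner_scaleC_right: "cinner x (a *\<^sub>C y) = cnj a * cinner x y"
  for x :: "'a::complex_inner"
  by (metis cinner_commute cinner_scaleC_left complex_cnj_mult)

global_interpretation complex_module: module "scaleC :: complex \<Rightarrow> 'a \<Rightarrow> 'a::complex_inner"
  by unfold_locales (fact scaleC_add_right scaleC_add_left scaleC_scaleC scaleC_one)+

interpretation cinner_left: additive "\<lambda>x. cinner x y"
  by standard (rule cinner_add_left)

interpretation cinner_right: additive "\<lambda>y. cinner x y"
  by standard (rule cinner_add_right)

declare cinner_left.zero [simp] cinner_right.zero [simp]

lemma cinner_self_eq_of_real: "cinner x x = complex_of_real (Re (cinner x x))"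
  for x :: "'a::complex_inner"
  using arg_cong[where f = Im, OF cinner_commute[of x x]] by (simp add: complex_eq_iff)

lemma Re_cinner_self_eq_zero_iff [simp]: "Re (cinner x x) = 0 \<longleftrightarrow> x = 0"
  for x :: "'a::complex_inner"
  by (metis cinner_eq_zero_iff cinner_self_eq_of_real of_real_0 zero_complex.sel(1))

lemma cinner_self_pos: "x \<noteq> 0 \<Longrightarrow> 0 < Re (cinner x x)"
  for x :: "'a::complex_inner"
  using cinner_nonneg[of x] by (simp add: order_less_le)

lemma cnorm_eq_zero_iff [simp]: "cnorm x = 0 \<longleftrightarrow> x = 0"
  by (simp add: cnorm_def)

lemma cinner_self_diff_projection:
  fixes a b :: "'a::complex_inner"
  assumes "b \<noteq> 0"
  defines "r \<equiv> Re (cinner b b)"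
  shows "Re (cinner (a - (cinner a b / r) *\<^sub>C b) (a - (cinner a b / r) *\<^sub>C b))
       = Re (cinner a a) - (cmod (cinner a b))\<^sup>2 / r"
proof -
  have "r \<noteq> 0"
    using assms(1) by (simp add: r_def)
  moreover have "cinner b b = r" and "cinner b a = cnj (cinner a b)"
    unfolding r_def by (fact cinner_self_eq_of_real cinner_commute)+
  ultimately have "cinner (a - (cinner a b / r) *\<^sub>C b) (a - (cinner a b / r) *\<^sub>C b)
      = cinner a a - cinner a b * cnj (cinner a b) / r"
    by (simp add: cinner_left.diff cinner_right.diff cinner_scaleC_left cinner_scaleC_right
        field_simps)
  then show ?thesis
    by (simp add: complex_norm_square[symmetric] flip: of_real_divide)
qed

lemma cinner_Cauchy_Schwarz: "cmod (cinner a b) \<le> cnorm a * cnorm b"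
  for a b :: "'a::complex_inner"
proof (cases "b = 0")
  case True
  then show ?thesis by (simp add: cnorm_def)
next
  case False
  let ?r = "Re (cinner b b)"
  have "0 < ?r"
    using cinner_self_pos[OF False] .
  moreover have "0 \<le> Re (cinner a a) - (cmod (cinner a b))\<^sup>2 / ?r"
    using cinner_self_diff_projection[OF False, of a] cinner_nonneg by metis
  ultimately have "(cmod (cinner a b))\<^sup>2 \<le> Re (cinner a a) * ?r"
    by (simp add: field_simps)
  then show ?thesis
    unfolding cnorm_def real_sqrt_mult [symmetric] by (rule real_le_rsqrt)
qed

lemma cinner_Cauchy_Schwarz_eq_iff:
  fixes a b :: "'a::complex_inner"
  assumes "b \<noteq> 0"
  shows "cmod (cinner a b) = cnorm a * cnorm b \<longleftrightarrow> (\<exists>c. a = c *\<^sub>C b)"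
proof
  let ?r = "Re (cinner b b)" and ?t = "cinner a b / Re (cinner b b)"
  assume "cmod (cinner a b) = cnorm a * cnorm b"
  then have "(cmod (cinner a b))\<^sup>2 = Re (cinner a a) * ?r"
    by (simp add: cnorm_def power_mult_distrib cinner_nonneg)
  then have "Re (cinner (a - ?t *\<^sub>C b) (a - ?t *\<^sub>C b)) = 0"
    using assms by (subst cinner_self_diff_projection[OF assms]) simp
  then show "\<exists>c. a = c *\<^sub>C b"
    by auto
next
  assume "\<exists>c. a = c *\<^sub>C b"
  then obtain c where a: "a = c *\<^sub>C b" ..
  define r where "r = Re (cinner b b)"
  have b: "cinner b b = complex_of_real r" "0 \<le> r"
    unfolding r_def by (fact cinner_self_eq_of_real cinner_nonneg)+
  have "cinner a b = c * r" and "cinner a a = c * cnj c * r"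
    by (simp_all add: a b cinner_scaleC_left cinner_scaleC_right mult.assoc)
  with b show "cmod (cinner a b) = cnorm a * cnorm b"
    by (simp add: cnorm_def norm_mult real_sqrt_mult flip: complex_norm_square)
qed

lemma inner_sum_orthonormal_family:
  assumes "finite I" "orthonormal_family I e" "k \<in> I"
  shows "(\<Sum>i\<in>I. (x \<bullet> e i) *\<^sub>R e i) \<bullet> e k = x \<bullet> e k"
proof -
  have "(\<Sum>i\<in>I. (x \<bullet> e i) *\<^sub>R e i) \<bullet> e k = (\<Sum>i\<in>I. if i = k then x \<bullet> e k else 0)"
    using assms(2,3) unfolding orthonormal_family_def inner_sum_left
    by (intro sum.cong) auto
  then show ?thesis
    using assms(1,3) by simp
qed

lemma cinner_sum_corthonormal_family:
  assumes "finite I" "corthonormal_family I e" "k \<in> I"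
  shows "cinner (\<Sum>i\<in>I. cinner x (e i) *\<^sub>C e i) (e k) = cinner x (e k)"
proof -
  have "cinner (\<Sum>i\<in>I. cinner x (e i) *\<^sub>C e i) (e k) = (\<Sum>i\<in>I. if i = k then cinner x (e k) else 0)"
    using assms(2,3) unfolding corthonormal_family_def cinner_left.sum cinner_scaleC_left
    by (intro sum.cong) auto
  then show ?thesis
    using assms(1,3) by simp
qed

lemma inner_self_orthonormal_projection:
  fixes e :: "'i \<Rightarrow> 'a::real_inner" and x :: 'a
  assumes "finite I" "orthonormal_family I e"
  defines "p \<equiv> \<Sum>i\<in>I. (x \<bullet> e i) *\<^sub>R e i"
  shows "p \<bullet> p = p \<bullet> x"
proof -
  have "p \<bullet> p = (\<Sum>i\<in>I. (x \<bullet> e i) * (p \<bullet> e i))"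
    by (simp add: p_def inner_sum_right)
  also have "\<dots> = (\<Sum>i\<in>I. (x \<bullet> e i) * (x \<bullet> e i))"
    using inner_sum_orthonormal_family[OF assms(1,2)] by (simp add: p_def)
  also have "\<dots> = p \<bullet> x"
    by (simp add: p_def inner_sum_left inner_commute [of "e _" x])
  finally show ?thesis .
qed

lemma cinner_self_corthonormal_projection:
  fixes e :: "'i \<Rightarrow> 'a::complex_inner" and x :: 'a
  assumes "finite I" "corthonormal_family I e"
  defines "p \<equiv> \<Sum>i\<in>I. cinner x (e i) *\<^sub>C e i"
  shows "cinner p p = cinner p x"
proof -
  have "cinner p p = (\<Sum>i\<in>I. cnj (cinner x (e i)) * cinner p (e i))"
    by (simp add: p_def cinner_right.sum cinner_scaleC_right)
  also have "\<dots> = (\<Sum>i\<in>I. cnj (cinner x (e i)) * cinner x (e i))"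
    using cinner_sum_corthonormal_family[OF assms(1,2)] by (simp add: p_def)
  also have "\<dots> = cinner p x"
    by (simp add: p_def cinner_left.sum cinner_scaleC_left mult.commute
        cinner_commute [of "e _" x])
  finally show ?thesis .
qed

lemma norm_reflection:
  fixes p x :: "'a::real_inner"
  assumes "p \<bullet> p = p \<bullet> x"
  shows "norm (2 *\<^sub>R p - x) = norm x"
proof -
  have "(2 *\<^sub>R p - x) \<bullet> (2 *\<^sub>R p - x) = 4 * (p \<bullet> p) - 4 * (p \<bullet> x) + x \<bullet> x"
    by (simp add: algebra_simps inner_commute)
  then show ?thesis
    using assms by (simp add: norm_eq_sqrt_inner)
qed

lemma cnorm_reflection:
  fixes p x :: "'a::complex_inner"
  assumes "cinner p p = cinner p x"
  shows "cnorm (2 *\<^sub>C p - x) = cnorm x"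
proof -
  have "cinner x p = cinner p p"
    by (metis assms cinner_commute)
  then have "cinner (2 *\<^sub>C p - x) (2 *\<^sub>C p - x) = cinner x x"
    using assms
    by (simp add: cinner_left.diff cinner_right.diff cinner_scaleC_left cinner_scaleC_right)
  then show ?thesis
    by (simp add: cnorm_def)
qed

lemma abs_inner_eq_norm_mult_iff:
  fixes a b :: "'a::real_inner"
  assumes "b \<noteq> 0"
  shows "\<bar>a \<bullet> b\<bar> = norm a * norm b \<longleftrightarrow> (\<exists>c. a = c *\<^sub>R b)"
proof -
  have "\<bar>a \<bullet> b\<bar> = norm a * norm b \<longleftrightarrow> collinear {0, b, a}"
    by (simp add: norm_cauchy_schwarz_equal inner_commute mult.commute insert_commute)
  also have "\<dots> \<longleftrightarrow> (\<exists>c. a = c *\<^sub>R b)"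
    using assms by (auto simp: collinear_lemma)
  finally show ?thesis .
qed

text \<open>The hypotheses say \<open>x - p \<bottom> p\<close> and \<open>y - q \<bottom> q\<close>; nothing else about the projections is used.\<close>

lemma projections_inner_bound:
  fixes p q x y :: "'a::real_inner"
  assumes "p \<bullet> p = p \<bullet> x" "q \<bullet> q = q \<bullet> y" "y \<noteq> 0"
  defines "S \<equiv> p \<bullet> y + x \<bullet> q - 2 * (p \<bullet> q) - 1/2 * (x \<bullet> y)"
  shows "\<bar>S\<bar> \<le> 1/2 * norm x * norm y \<and>
    (\<bar>S\<bar> = 1/2 * norm x * norm y \<longleftrightarrow> (\<exists>c. x - c *\<^sub>R y = 2 *\<^sub>R (p - c *\<^sub>R q)))"
proof -
  define u v where "u = 2 *\<^sub>R p - x" and "v = 2 *\<^sub>R q - y"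
  have "S = - 1/2 * (u \<bullet> v)"
    by (simp add: S_def u_def v_def algebra_simps)
  then have S: "\<bar>S\<bar> = 1/2 * \<bar>u \<bullet> v\<bar>"
    by (simp add: abs_mult)
  have norms: "norm u = norm x" "norm v = norm y"
    using norm_reflection assms(1,2) by (auto simp: u_def v_def)
  have "u = c *\<^sub>R v \<longleftrightarrow> x - c *\<^sub>R y = 2 *\<^sub>R (p - c *\<^sub>R q)" for c
    by (auto simp: u_def v_def algebra_simps)
  moreover have "v \<noteq> 0"
    using norms assms(3) by auto
  ultimately show ?thesis
    using Cauchy_Schwarz_ineq2[of u v] abs_inner_eq_norm_mult_iff[of v u]
    by (simp add: S norms)
qed

lemma projections_cinner_bound:
  fixes p q x y :: "'a::complex_inner"
  assumes "cinner p p = cinner p x" "cinner q q = cinner q y" "y \<noteq> 0"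
  defines "S \<equiv> cinner p y + cinner x q - 2 * cinner p q - 1/2 * cinner x y"
  shows "cmod S \<le> 1/2 * cnorm x * cnorm y \<and>
    (cmod S = 1/2 * cnorm x * cnorm y \<longleftrightarrow> (\<exists>c. x - c *\<^sub>C y = 2 *\<^sub>C (p - c *\<^sub>C q)))"
proof -
  define u v where "u = 2 *\<^sub>C p - x" and "v = 2 *\<^sub>C q - y"
  have "S = - 1/2 * cinner u v"
    by (simp add: S_def u_def v_def cinner_left.diff cinner_right.diff cinner_scaleC_left
        cinner_scaleC_right algebra_simps)
  then have S: "cmod S = 1/2 * cmod (cinner u v)"
    by (simp add: norm_mult)
  have norms: "cnorm u = cnorm x" "cnorm v = cnorm y"
    using cnorm_reflection assms(1,2) by (auto simp: u_def v_def)
  have "u = c *\<^sub>C v \<longleftrightarrow> x - c *\<^sub>C y = 2 *\<^sub>C (p - c *\<^sub>C q)" for c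
    by (auto simp: u_def v_def algebra_simps)
  moreover have "v \<noteq> 0"
    using norms assms(3) cnorm_eq_zero_iff by metis
  ultimately show ?thesis
    using cinner_Cauchy_Schwarz[of u v] cinner_Cauchy_Schwarz_eq_iff[of v u]
    by (simp add: S norms)
qed

lemma orthonormal_families_bound:
  fixes e :: "'i \<Rightarrow> 'a::real_inner" and f :: "'j \<Rightarrow> 'a" and x y :: 'a
  assumes "finite I" "finite J" "orthonormal_family I e" "orthonormal_family J f" "y \<noteq> 0"
  defines "S \<equiv> (\<Sum>i\<in>I. (x \<bullet> e i) * (e i \<bullet> y)) + (\<Sum>j\<in>J. (x \<bullet> f j) * (f j \<bullet> y))
               - 2 * (\<Sum>i\<in>I. \<Sum>j\<in>J. (x \<bullet> e i) * (f j \<bullet> y) * (e i \<bullet> f j))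
               - (1/2) * (x \<bullet> y)"
  shows "\<bar>S\<bar> \<le> (1/2) * norm x * norm y \<and>
          (\<bar>S\<bar> = (1/2) * norm x * norm y \<longleftrightarrow>
            (\<exists>c::real. x - c *\<^sub>R y =
               2 *\<^sub>R ((\<Sum>i\<in>I. (x \<bullet> e i) *\<^sub>R e i) - c *\<^sub>R (\<Sum>j\<in>J. (y \<bullet> f j) *\<^sub>R f j))))"
proof -
  define p q where "p = (\<Sum>i\<in>I. (x \<bullet> e i) *\<^sub>R e i)" and "q = (\<Sum>j\<in>J. (y \<bullet> f j) *\<^sub>R f j)"
  have "p \<bullet> y = (\<Sum>i\<in>I. (x \<bullet> e i) * (e i \<bullet> y))"
    by (simp add: p_def inner_sum_left)
  moreover have "x \<bullet> q = (\<Sum>j\<in>J. (x \<bullet> f j) * (f j \<bullet> y))"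
    by (simp add: q_def inner_sum_right inner_commute mult.commute)
  moreover have "p \<bullet> q = (\<Sum>i\<in>I. \<Sum>j\<in>J. (x \<bullet> e i) * (f j \<bullet> y) * (e i \<bullet> f j))"
    by (simp add: p_def q_def inner_sum_left inner_sum_right sum_distrib_left inner_commute
        mult_ac) (rule sum.swap)
  ultimately have "S = p \<bullet> y + x \<bullet> q - 2 * (p \<bullet> q) - 1/2 * (x \<bullet> y)"
    by (simp add: S_def)
  moreover have "p \<bullet> p = p \<bullet> x" "q \<bullet> q = q \<bullet> y"
    using inner_self_orthonormal_projection assms(1-4) by (auto simp: p_def q_def)
  ultimately show ?thesis
    using projections_inner_bound assms(5) by (simp add: p_def q_def)
qed

lemma corthonormal_families_bound:
  fixes e :: "'i \<Rightarrow> 'a::complex_inner" and f :: "'j \<Rightarrow> 'a" and x y :: 'a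
  assumes "finite I" "finite J" "corthonormal_family I e" "corthonormal_family J f" "y \<noteq> 0"
  defines "S \<equiv> (\<Sum>i\<in>I. cinner x (e i) * cinner (e i) y) + (\<Sum>j\<in>J. cinner x (f j) * cinner (f j) y)
               - 2 * (\<Sum>i\<in>I. \<Sum>j\<in>J. cinner x (e i) * cinner (f j) y * cinner (e i) (f j))
               - (1/2) * cinner x y"
  shows "cmod S \<le> (1/2) * cnorm x * cnorm y \<and>
          (cmod S = (1/2) * cnorm x * cnorm y \<longleftrightarrow>
            (\<exists>c::complex. x - c *\<^sub>C y =
               2 *\<^sub>C ((\<Sum>i\<in>I. cinner x (e i) *\<^sub>C e i) - c *\<^sub>C (\<Sum>j\<in>J. cinner y (f j) *\<^sub>C f j))))"
proof -
  define p q where "p = (\<Sum>i\<in>I. cinner x (e i) *\<^sub>C e i)" and "q = (\<Sum>j\<in>J. cinner y (f j) *\<^sub>C f j)"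
  have "cinner p y = (\<Sum>i\<in>I. cinner x (e i) * cinner (e i) y)"
    by (simp add: p_def cinner_left.sum cinner_scaleC_left)
  moreover have "cinner x q = (\<Sum>j\<in>J. cinner x (f j) * cinner (f j) y)"
    by (simp add: q_def cinner_right.sum cinner_scaleC_right mult.commute
        cinner_commute [of y "f _"])
  moreover have "cinner p q = (\<Sum>i\<in>I. \<Sum>j\<in>J. cinner x (e i) * cinner (f j) y * cinner (e i) (f j))"
    by (simp add: p_def q_def cinner_left.sum cinner_right.sum cinner_scaleC_left
        cinner_scaleC_right sum_distrib_left mult_ac cinner_commute [of y "f _"]) (rule sum.swap)
  ultimately have "S = cinner p y + cinner x q - 2 * cinner p q - 1/2 * cinner x y"
    by (simp add: S_def)
  moreover have "cinner p p = cinner p x" "cinner q q = cinner q y"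
    using cinner_self_corthonormal_projection assms(1-4) by (auto simp: p_def q_def)
  ultimately show ?thesis
    using projections_cinner_bound assms(5) by (simp add: p_def q_def)
qed

theorem theorem2p1:
  shows
  "(\<forall>(I :: 'i set) (J :: 'j set) (e :: 'i \<Rightarrow> 'a::real_inner) (f :: 'j \<Rightarrow> 'a) x y.
      finite I \<longrightarrow> finite J \<longrightarrow> orthonormal_family I e \<longrightarrow> orthonormal_family J f \<longrightarrow>
      x \<noteq> 0 \<longrightarrow> y \<noteq> 0 \<longrightarrow>
      (let S = (\<Sum>i\<in>I. (x \<bullet> e i) * (e i \<bullet> y)) + (\<Sum>j\<in>J. (x \<bullet> f j) * (f j \<bullet> y))
               - 2 * (\<Sum>i\<in>I. \<Sum>j\<in>J. (x \<bullet> e i) * (f j \<bullet> y) * (e i \<bullet> f j))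
               - (1/2) * (x \<bullet> y)
       in \<bar>S\<bar> \<le> (1/2) * norm x * norm y \<and>
          (\<bar>S\<bar> = (1/2) * norm x * norm y \<longleftrightarrow>
            (\<exists>c::real. x - c *\<^sub>R y =
               2 *\<^sub>R ((\<Sum>i\<in>I. (x \<bullet> e i) *\<^sub>R e i) - c *\<^sub>R (\<Sum>j\<in>J. (y \<bullet> f j) *\<^sub>R f j))))))
   \<and>
   (\<forall>(I :: 'i set) (J :: 'j set) (e :: 'i \<Rightarrow> 'b::complex_inner) (f :: 'j \<Rightarrow> 'b) x y.
      finite I \<longrightarrow> finite J \<longrightarrow> corthonormal_family I e \<longrightarrow> corthonormal_family J f \<longrightarrow>
      x \<noteq> 0 \<longrightarrow> y \<noteq> 0 \<longrightarrow>
      (let S = (\<Sum>i\<in>I. cinner x (e i) * cinner (e i) y) + (\<Sum>j\<in>J. cinner x (f j) * cinner (f j) y)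
               - 2 * (\<Sum>i\<in>I. \<Sum>j\<in>J. cinner x (e i) * cinner (f j) y * cinner (e i) (f j))
               - (1/2) * cinner x y
       in cmod S \<le> (1/2) * cnorm x * cnorm y \<and>
          (cmod S = (1/2) * cnorm x * cnorm y \<longleftrightarrow>
            (\<exists>c::complex. x - c *\<^sub>C y =
               2 *\<^sub>C ((\<Sum>i\<in>I. cinner x (e i) *\<^sub>C e i) - c *\<^sub>C (\<Sum>j\<in>J. cinner y (f j) *\<^sub>C f j))))))"
  unfolding Let_def
  by (rule conjI; intro allI impI orthonormal_families_bound corthonormal_families_bound)

end
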